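(* Let $T\ge 1$ be an integer and let $\phi:\mathbb R\to(0,1)$ be a gate function. Consider the loss $L(z)=|\phi(z)^{T}-1|$ and the gradient flow $\frac{dz}{d\tau}=-\frac{\partial L}{\partial z}$ with an arbitrary initial value $z(0)\in\mathbb R$, and let $f(\tau)=\phi(z(\tau))$. (a) If $\phi=\sigma$ is the sigmoid function $\sigma(z)=1/(1+e^{-z})$, then $1-f(\tau)=O(\tau^{-1})$ as $\tau\to\infty$. (b) If $\phi=\sigma_{\rm ns}$ is the normalized softsign function $\sigma_{\rm ns}(z)=\frac12\left(\frac{z}{2+|z|}+1\right)$, then $1-f(\tau)=O(\tau^{-1/3})$ as $\tau\to\infty$.
   Context: This is a model problem for learning long time scales: $T=t_1-t_0$ is a time difference, $f=\phi(z)$ is a forget-gate value, and the target decay factor is $\lambda_*=1$. Note $\sigma_{\rm ns}(z)=(\mathrm{softsign}(z/2)+1)/2$ with $\mathrm{softsign}(z)=z/(1+|z|)$. *)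

theory Defs
  imports "HOL-Analysis.Analysis" "HOL-Library.Landau_Symbols"
begin

definition sigmoid :: "real \<Rightarrow> real" where
  "sigmoid z = 1 / (1 + exp (- z))"

definition softsign :: "real \<Rightarrow> real" where
  "softsign z = z / (1 + \<bar>z\<bar>)"

definition nsoftsign :: "real \<Rightarrow> real" where
  "nsoftsign z = (z / (2 + \<bar>z\<bar>) + 1) / 2"

definition gate_loss :: "(real \<Rightarrow> real) \<Rightarrow> nat \<Rightarrow> real \<Rightarrow> real" where
  "gate_loss \<phi> T z = \<bar>\<phi> z ^ T - 1\<bar>"

definition grad_flow :: "(real \<Rightarrow> real) \<Rightarrow> nat \<Rightarrow> (real \<Rightarrow> real) \<Rightarrow> bool" where
  "grad_flow \<phi> T z \<longleftrightarrow>
     (\<forall>t\<ge>0. (z has_real_derivative (- deriv (gate_loss \<phi> T) (z t))) (at t within {0..}))"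

end

theory Submission
  imports Defs
begin

text \<open>
  Since \<open>0 < \<phi> < 1\<close>, the loss is \<open>1 - \<phi>(z)^T\<close> and the flow reads
  \<open>z' = T \<phi>'(z) \<phi>(z)^(T-1) \<ge> 0\<close>; so \<open>z\<close> increases and \<open>\<phi>(z(\<tau>)) \<ge> \<phi>(z(0)) > 0\<close>.
  Hence for any potential \<open>P\<close> with \<open>P' \<phi>' \<ge> m > 0\<close> on \<open>[z(0), \<infinity>)\<close>, the quantity
  \<open>P(z(\<tau>))\<close> grows at least linearly in \<open>\<tau>\<close>.
  For the sigmoid \<open>\<sigma>' = \<sigma>^2 e^(-z)\<close>, so \<open>P = exp\<close> works with \<open>m = \<sigma>(z(0))^2\<close>, and
  \<open>1 - \<sigma>(z) = 1 / (1 + e^z) = O(1/\<tau>)\<close>.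
  For the normalized softsign \<open>\<sigma>\<^sub>n\<^sub>s' = (2 + |z|)^(-2)\<close>, so the antiderivative \<open>P\<close> of
  \<open>3 (2 + |z|)^2\<close>, which is \<open>(2 + z)^3\<close> for \<open>z \<ge> 0\<close>, works with \<open>m = 3\<close>; eventually
  \<open>z > 0\<close> and \<open>1 - \<sigma>\<^sub>n\<^sub>s(z) = 1 / (2 + z) = O(\<tau>^(-1/3))\<close>.
\<close>

lemma has_real_derivative_glue:
  fixes f g h :: "real \<Rightarrow> real"
  assumes f_g: "\<And>y. a \<le> y \<Longrightarrow> f y = g y" and f_h: "\<And>y. y \<le> a \<Longrightarrow> f y = h y"
    and g': "\<And>y. a \<le> y \<Longrightarrow> (g has_real_derivative D y) (at y)"
    and h': "\<And>y. y \<le> a \<Longrightarrow> (h has_real_derivative D y) (at y)"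
  shows "(f has_real_derivative D x) (at x)"
proof (cases x a rule: linorder_cases)
  case less
  show ?thesis
    by (rule has_field_derivative_transform_within_open[OF h', of x "{..<a}"])
       (use less f_h in auto)
next
  case greater
  show ?thesis
    by (rule has_field_derivative_transform_within_open[OF g', of x "{a<..}"])
       (use greater f_g in auto)
next
  case equal
  have "(f has_real_derivative D a) (at a within {..a})"
    by (rule has_field_derivative_transform_within
        [OF has_field_derivative_at_within[OF h'[OF order_refl]] zero_less_one])
       (auto simp: f_h)
  moreover have "(f has_real_derivative D a) (at a within {a..})"
    by (rule has_field_derivative_transform_within
        [OF has_field_derivative_at_within[OF g'[OF order_refl]] zero_less_one])
       (auto simp: f_g)
  ultimately have "(f has_real_derivative D a) (at a within {..a} \<union> {a..})"
    unfolding has_field_derivative_iff Lim_within_Un by blast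
  moreover have "{..a} \<union> {a..} = UNIV" by auto
  ultimately show ?thesis using equal by simp
qed

lemma linear_lower_bound_of_derivative_ge:
  fixes F F' :: "real \<Rightarrow> real"
  assumes F': "\<And>t. 0 \<le> t \<Longrightarrow> (F has_real_derivative F' t) (at t within {0..})"
    and k: "\<And>t. 0 \<le> t \<Longrightarrow> k \<le> F' t" and "0 \<le> t"
  shows "F 0 + k * t \<le> F t"
proof -
  let ?G = "\<lambda>s. F s - k * s"
  have G': "(?G has_real_derivative F' s - k) (at s within {0..})" if "0 \<le> s" for s
    using F'[OF that] by (auto intro!: derivative_eq_intros)
  have "?G 0 \<le> ?G t"
  proof (rule DERIV_nonneg_imp_increasing_open[OF \<open>0 \<le> t\<close>])
    fix s :: real assume s: "0 < s" "s < t"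
    have "at s within {0..} = at s"
      by (rule at_within_interior) (use s in auto)
    then show "\<exists>y. (?G has_real_derivative y) (at s) \<and> 0 \<le> y"
      using G'[of s] k[of s] s by auto
  next
    have "continuous_on {0..} ?G"
      using G' by (auto simp: continuous_on_eq_continuous_within intro: DERIV_continuous)
    then show "continuous_on {0..t} ?G"
      by (rule continuous_on_subset) auto
  qed
  then show ?thesis by simp
qed

lemma gate_loss_eq:
  assumes "\<And>x. 0 \<le> \<phi> x" and "\<And>x. \<phi> x \<le> 1"
  shows "gate_loss \<phi> T = (\<lambda>x. 1 - \<phi> x ^ T)"
  using assms by (auto simp: gate_loss_def power_le_one)

lemma grad_flow_has_real_derivative:
  assumes "\<And>x. 0 \<le> \<phi> x" and "\<And>x. \<phi> x \<le> 1"
    and \<phi>': "\<And>x. (\<phi> has_real_derivative \<phi>' x) (at x)"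
    and flow: "grad_flow \<phi> T z" and "0 \<le> t"
  shows "(z has_real_derivative T * \<phi>' (z t) * \<phi> (z t) ^ (T - 1)) (at t within {0..})"
proof -
  have "((\<lambda>x. 1 - \<phi> x ^ T) has_real_derivative - (T * \<phi>' x * \<phi> x ^ (T - 1))) (at x)" for x
    using \<phi>'[of x] by (auto intro!: derivative_eq_intros)
  then have "deriv (gate_loss \<phi> T) x = - (T * \<phi>' x * \<phi> x ^ (T - 1))" for x
    unfolding gate_loss_eq[OF assms(1,2)] by (rule DERIV_imp_deriv)
  then show ?thesis
    using flow \<open>0 \<le> t\<close> unfolding grad_flow_def by simp
qed

lemma grad_flow_potential_growth:
  fixes P P' \<phi> \<phi>' :: "real \<Rightarrow> real"
  assumes \<phi>_nonneg: "\<And>x. 0 \<le> \<phi> x" and \<phi>_le_1: "\<And>x. \<phi> x \<le> 1"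
    and \<phi>': "\<And>x. (\<phi> has_real_derivative \<phi>' x) (at x)" and \<phi>'_nonneg: "\<And>x. 0 \<le> \<phi>' x"
    and P': "\<And>x. (P has_real_derivative P' x) (at x)"
    and m: "\<And>x. z 0 \<le> x \<Longrightarrow> m \<le> P' x * \<phi>' x" and "0 \<le> m"
    and flow: "grad_flow \<phi> T z" and "0 \<le> t"
  shows "P (z 0) + T * m * \<phi> (z 0) ^ (T - 1) * t \<le> P (z t)"
proof -
  define z' where "z' s = T * \<phi>' (z s) * \<phi> (z s) ^ (T - 1)" for s
  have z': "(z has_real_derivative z' s) (at s within {0..})" if "0 \<le> s" for s
    unfolding z'_def using grad_flow_has_real_derivative[OF \<phi>_nonneg \<phi>_le_1 \<phi>' flow that] .
  have z_ge: "z 0 \<le> z s" if "0 \<le> s" for s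
    using linear_lower_bound_of_derivative_ge[of z z' 0 s] z' that
    by (simp add: z'_def \<phi>'_nonneg \<phi>_nonneg)
  have \<phi>_ge: "\<phi> (z 0) ^ (T - 1) \<le> \<phi> (z s) ^ (T - 1)" if "0 \<le> s" for s
    using DERIV_nonneg_imp_nondecreasing[OF z_ge[OF that]] \<phi>' \<phi>'_nonneg
    by (intro power_mono) (auto simp: \<phi>_nonneg)
  have Pz': "(P \<circ> z has_real_derivative P' (z s) * z' s) (at s within {0..})" if "0 \<le> s" for s
    by (rule DERIV_chain[OF P' z'[OF that]])
  have "T * m * \<phi> (z 0) ^ (T - 1) \<le> P' (z s) * z' s" if "0 \<le> s" for s
  proof -
    have "m * \<phi> (z 0) ^ (T - 1) \<le> (P' (z s) * \<phi>' (z s)) * \<phi> (z s) ^ (T - 1)"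
      using m[OF z_ge[OF that]] \<phi>_ge[OF that] \<open>0 \<le> m\<close>
      by (intro mult_mono) (auto simp: \<phi>_nonneg)
    then have "T * (m * \<phi> (z 0) ^ (T - 1))
        \<le> T * ((P' (z s) * \<phi>' (z s)) * \<phi> (z s) ^ (T - 1))"
      by (rule mult_left_mono) simp
    then show ?thesis
      unfolding z'_def by (simp add: mult_ac)
  qed
  from linear_lower_bound_of_derivative_ge[OF Pz' this \<open>0 \<le> t\<close>] show ?thesis
    by simp
qed

lemma sigmoid_pos: "0 < sigmoid x"
  unfolding sigmoid_def by (simp add: add_pos_pos)

lemma sigmoid_less_1: "sigmoid x < 1"
  unfolding sigmoid_def by (simp add: add_pos_pos)

lemma one_minus_sigmoid: "1 - sigmoid x = 1 / (1 + exp x)"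
proof -
  have "0 < 1 + exp x" by (simp add: add_pos_pos)
  then show ?thesis
    unfolding sigmoid_def exp_minus by (simp add: field_simps)
qed

lemma has_real_derivative_sigmoid: "(sigmoid has_real_derivative sigmoid x ^ 2 * exp (- x)) (at x)"
proof -
  have "0 < 1 + exp (- x)" by (simp add: add_pos_pos)
  then show ?thesis
    unfolding sigmoid_def[abs_def]
    by (auto intro!: derivative_eq_intros simp: field_simps power2_eq_square)
qed

lemma sigmoid_flow_tail:
  assumes "1 \<le> T" and flow: "grad_flow sigmoid T z"
  shows "(\<lambda>\<tau>. 1 - sigmoid (z \<tau>)) \<in> O[at_top](\<lambda>\<tau>. 1 / \<tau>)"
proof -
  define k where "k = T * sigmoid (z 0) ^ 2 * sigmoid (z 0) ^ (T - 1)"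
  have "k > 0"
    using \<open>1 \<le> T\<close> unfolding k_def by (intro mult_pos_pos zero_less_power sigmoid_pos) simp_all
  have exp_growth: "exp (z 0) + k * \<tau> \<le> exp (z \<tau>)" if "0 \<le> \<tau>" for \<tau>
    unfolding k_def
  proof (rule grad_flow_potential_growth[OF _ _ has_real_derivative_sigmoid _ DERIV_exp _ _ flow that])
    fix x assume "z 0 \<le> x"
    then have "sigmoid (z 0) ^ 2 \<le> sigmoid x ^ 2"
      using sigmoid_pos by (intro power_mono) (auto simp: sigmoid_def add_pos_pos frac_le)
    then show "sigmoid (z 0) ^ 2 \<le> exp x * (sigmoid x ^ 2 * exp (- x))"
      by (simp add: mult.left_commute[of "exp x"] exp_minus_inverse)
  qed (auto simp: less_imp_le sigmoid_pos sigmoid_less_1)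
  have "\<forall>\<^sub>F \<tau> in at_top. norm (1 - sigmoid (z \<tau>)) \<le> (1 / k) * norm (1 / \<tau>)"
    using eventually_gt_at_top[of 0]
  proof eventually_elim
    case (elim \<tau>)
    have "k * \<tau> \<le> 1 + exp (z \<tau>)"
      using exp_growth[of \<tau>] elim exp_gt_zero[of "z 0"] by linarith
    then have "1 / (1 + exp (z \<tau>)) \<le> 1 / (k * \<tau>)"
      using \<open>k > 0\<close> elim by (intro divide_left_mono mult_pos_pos add_pos_pos) auto
    then show ?case
      using \<open>k > 0\<close> elim sigmoid_less_1[of "z \<tau>"] by (simp add: one_minus_sigmoid)
  qed
  then show ?thesis by (rule bigoI)
qed

lemma nsoftsign_nonneg: "0 \<le> x \<Longrightarrow> nsoftsign x = 1 - 1 / (2 + x)"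
  unfolding nsoftsign_def by (simp add: field_simps)

lemma nsoftsign_nonpos: "x \<le> 0 \<Longrightarrow> nsoftsign x = 1 / (2 - x)"
  unfolding nsoftsign_def by (simp add: field_simps)

lemma nsoftsign_pos: "0 < nsoftsign x"
  by (cases "0 \<le> x") (simp_all add: nsoftsign_nonneg nsoftsign_nonpos)

lemma nsoftsign_less_1: "nsoftsign x < 1"
  by (cases "0 \<le> x") (simp_all add: nsoftsign_nonneg nsoftsign_nonpos)

lemma has_real_derivative_nsoftsign:
  "(nsoftsign has_real_derivative 1 / (2 + \<bar>x\<bar>) ^ 2) (at x)"
proof (rule has_real_derivative_glue[where a = 0 and g = "\<lambda>y. 1 - 1 / (2 + y)"
      and h = "\<lambda>y. 1 / (2 - y)"])
  fix y :: real
  assume "0 \<le> y"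
  then show "((\<lambda>y. 1 - 1 / (2 + y)) has_real_derivative 1 / (2 + \<bar>y\<bar>) ^ 2) (at y)"
    by (auto intro!: derivative_eq_intros simp: power2_eq_square)
next
  fix y :: real
  assume "y \<le> 0"
  then show "((\<lambda>y. 1 / (2 - y)) has_real_derivative 1 / (2 + \<bar>y\<bar>) ^ 2) (at y)"
    by (auto intro!: derivative_eq_intros simp: power2_eq_square)
qed (simp_all add: nsoftsign_nonneg nsoftsign_nonpos)

definition nsoftsign_potential :: "real \<Rightarrow> real" where
  "nsoftsign_potential x = (if 0 \<le> x then (2 + x) ^ 3 else 16 - (2 - x) ^ 3)"

lemma has_real_derivative_nsoftsign_potential:
  "(nsoftsign_potential has_real_derivative 3 * (2 + \<bar>x\<bar>) ^ 2) (at x)"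
proof (rule has_real_derivative_glue[where a = 0 and g = "\<lambda>y. (2 + y) ^ 3"
      and h = "\<lambda>y. 16 - (2 - y) ^ 3"])
  fix y :: real
  assume "0 \<le> y"
  then show "((\<lambda>y. (2 + y) ^ 3) has_real_derivative 3 * (2 + \<bar>y\<bar>) ^ 2) (at y)"
    by (auto intro!: derivative_eq_intros)
next
  fix y :: real
  assume "y \<le> 0"
  then show "((\<lambda>y. 16 - (2 - y) ^ 3) has_real_derivative 3 * (2 + \<bar>y\<bar>) ^ 2) (at y)"
    by (auto intro!: derivative_eq_intros)
qed (simp_all add: nsoftsign_potential_def)

lemma nsoftsign_potential_nonpos: "x \<le> 0 \<Longrightarrow> nsoftsign_potential x \<le> 8"
proof -
  assume "x \<le> 0"
  then have "2 ^ 3 \<le> (2 - x) ^ 3"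
    by (intro power_mono) auto
  with \<open>x \<le> 0\<close> show ?thesis
    by (auto simp: nsoftsign_potential_def)
qed

lemma powr_one_third_le_if_le_cube:
  fixes a b :: real
  assumes "0 \<le> a" "0 \<le> b" "a \<le> b ^ 3"
  shows "a powr (1/3) \<le> b"
proof -
  have "a powr (1/3) \<le> (b ^ 3) powr (1/3)"
    using assms by (intro powr_mono2) auto
  also have "\<dots> = b"
  proof (cases "b = 0")
    case False
    with \<open>0 \<le> b\<close> have "b powr 3 = b ^ 3"
      by (intro powr_numeral) simp
    then have "(b ^ 3) powr (1/3) = (b powr 3) powr (1/3)"
      by (simp only:)
    also have "\<dots> = b"
      using \<open>0 \<le> b\<close> by (subst powr_powr) simp
    finally show ?thesis .
  qed simp
  finally show ?thesis .
qed

lemma nsoftsign_flow_tail: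
  assumes "1 \<le> T" and flow: "grad_flow nsoftsign T z"
  shows "(\<lambda>\<tau>. 1 - nsoftsign (z \<tau>)) \<in> O[at_top](\<lambda>\<tau>. 1 / \<tau> powr (1/3))"
proof -
  define P where "P = nsoftsign_potential"
  define k where "k = real T * 3 * nsoftsign (z 0) ^ (T - 1)"
  have "k > 0"
    using \<open>1 \<le> T\<close> unfolding k_def by (intro mult_pos_pos zero_less_power nsoftsign_pos) simp_all
  have P_growth: "P (z 0) + k * \<tau> \<le> P (z \<tau>)" if "0 \<le> \<tau>" for \<tau>
    unfolding k_def P_def
    by (rule grad_flow_potential_growth[OF _ _ has_real_derivative_nsoftsign _
          has_real_derivative_nsoftsign_potential _ _ flow that])
       (auto simp: less_imp_le nsoftsign_pos nsoftsign_less_1)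
  define C where "C = 1 / (k / 2) powr (1/3)"
  have "\<forall>\<^sub>F \<tau> in at_top. norm (1 - nsoftsign (z \<tau>)) \<le> C * norm (1 / \<tau> powr (1/3))"
    using eventually_gt_at_top[of "max 0 ((2 * \<bar>P (z 0)\<bar> + 16) / k)"]
  proof eventually_elim
    case (elim \<tau>)
    then have "0 < \<tau>" and "(2 * \<bar>P (z 0)\<bar> + 16) / k < \<tau>"
      by simp_all
    then have "2 * \<bar>P (z 0)\<bar> + 16 < k * \<tau>"
      using \<open>k > 0\<close> by (simp add: divide_less_eq mult.commute)
    with P_growth[of \<tau>] \<open>0 < \<tau>\<close> have P_large: "8 < P (z \<tau>)" "k * \<tau> / 2 \<le> P (z \<tau>)"
      by auto
    then have "0 < z \<tau>"
      using nsoftsign_potential_nonpos[of "z \<tau>"] unfolding P_def by linarith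
    with P_large have "k * \<tau> / 2 \<le> (2 + z \<tau>) ^ 3"
      by (simp add: P_def nsoftsign_potential_def)
    then have "(k * \<tau> / 2) powr (1/3) \<le> 2 + z \<tau>"
      using \<open>0 < z \<tau>\<close> \<open>0 < \<tau>\<close> \<open>k > 0\<close> by (intro powr_one_third_le_if_le_cube) auto
    moreover have "(k * \<tau> / 2) powr (1/3) = (k / 2) powr (1/3) * \<tau> powr (1/3)"
      using \<open>0 < \<tau>\<close> \<open>k > 0\<close> by (simp add: powr_mult[symmetric])
    ultimately have "1 / (2 + z \<tau>) \<le> C * (1 / \<tau> powr (1/3))"
      using \<open>0 < z \<tau>\<close> \<open>0 < \<tau>\<close> \<open>k > 0\<close> unfolding C_def
      by (simp add: divide_simps)
    then show ?case
      using \<open>0 < z \<tau>\<close> \<open>0 < \<tau>\<close> by (simp add: nsoftsign_nonneg)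
  qed
  then show ?thesis by (rule bigoI)
qed

theorem proposition2:
  fixes T :: nat
  assumes "T \<ge> 1"
  shows "(\<forall>z. grad_flow sigmoid T z \<longrightarrow>
            (\<lambda>\<tau>. 1 - sigmoid (z \<tau>)) \<in> O[at_top](\<lambda>\<tau>. 1 / \<tau>))
       \<and> (\<forall>z. grad_flow nsoftsign T z \<longrightarrow>
            (\<lambda>\<tau>. 1 - nsoftsign (z \<tau>)) \<in> O[at_top](\<lambda>\<tau>. 1 / \<tau> powr (1/3)))"
  using sigmoid_flow_tail[OF assms] nsoftsign_flow_tail[OF assms] by blast

end
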